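(* Let $q$ be a prime power. There exists a $2$-code of $\mathcal S_{3,q}$ of size $(q^2-1)(q^2+q+1)+1$.
   Context: $\mathcal S_{3,q}$ is the set of $3\times 3$ symmetric matrices over ${\rm GF}(q)$, with rank distance $d_r(A,B)={\rm rk}(A-B)$. A $2$-code is a non-empty subset whose minimum distance $\min\{{\rm rk}(c_1-c_2): c_1\neq c_2\}$ equals $2$. *)

theory Defs
  imports "Jordan_Normal_Form.DL_Rank"
begin

definition sym_mats3 :: "'a::field mat set" where
  "sym_mats3 = {A. A \<in> carrier_mat 3 3 \<and> transpose_mat A = A}"

definition rank_dist :: "'a::field mat \<Rightarrow> 'a mat \<Rightarrow> nat" where
  "rank_dist A B = vec_space.rank 3 (A - B)"

definition is_code :: "nat \<Rightarrow> 'a::field mat set \<Rightarrow> bool" where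
  "is_code d C \<longleftrightarrow> C \<noteq> {} \<and> C \<subseteq> sym_mats3 \<and>
     Min {rank_dist c1 c2 | c1 c2. c1 \<in> C \<and> c2 \<in> C \<and> c1 \<noteq> c2} = d"

end

theory Submission
  imports Defs "Jordan_Normal_Form.DL_Rank_Submatrix"
begin

(* Fix n outside the image of x \<mapsto> x\<^sup>2 + x (it exists in a finite field because 0 and -1
   have the same image). Then every nonzero symmetric matrix [[s, t], [t, n s - t]] is
   nonsingular, since its determinant vanishes exactly when t/s is a root of x\<^sup>2 + x - n.
   For each point p of the projective plane pull this pencil of binary forms back along a
   basis u, w of the annihilator of p: the codewords
   s u u\<^sup>T + t (u w\<^sup>T + w u\<^sup>T) + (n s - t) w w\<^sup>T with (s, t) \<noteq> 0 have rank 2 and kernel spanned by p.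
   Two codewords on the same point differ by a third one. For codewords X, Y on distinct
   points p, p' we have p\<^sup>T (X - Y) p' = 0, so if X - Y had rank at most 1 it would kill p or p';
   then Y or X vanishes and X - Y has rank 2 after all. Together with the zero matrix this
   gives (q\<^sup>2 + q + 1)(q\<^sup>2 - 1) + 1 symmetric matrices at mutual rank distance at least 2. *)

section \<open>Linear algebra\<close>

lemma det_mat_2x2:
  assumes "A \<in> carrier_mat 2 2"
  shows "det A = A $$ (0,0) * A $$ (1,1) - A $$ (0,1) * A $$ (1,0)"
proof -
  have "det A = (\<Sum>i<2. A $$ (i,0) * cofactor A i 0)"
    by (rule laplace_expansion_column[OF assms], simp)
  also have "\<dots> = A $$ (0,0) * cofactor A 0 0 + A $$ (1,0) * cofactor A 1 0"
    by (simp add: numeral_2_eq_2)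
  also have "cofactor A 0 0 = A $$ (1,1)"
    unfolding cofactor_def using assms
    by (subst det_single, auto simp: mat_delete_def)
  also have "cofactor A 1 0 = - A $$ (0,1)"
    unfolding cofactor_def using assms
    by (subst det_single, auto simp: mat_delete_def)
  finally show ?thesis by (simp add: algebra_simps)
qed

lemma det_submatrix_2x2:
  assumes A: "A \<in> carrier_mat n nc" and "a < c" "c < n" "b < d" "d < nc"
  shows "det (submatrix A {a,c} {b,d}) = A $$ (a,b) * A $$ (c,d) - A $$ (a,d) * A $$ (c,b)"
proof -
  let ?S = "submatrix A {a,c} {b,d}"
  have rows: "{i. i < dim_row A \<and> i \<in> {a,c}} = {a,c}"
    and cols: "{j. j < dim_col A \<and> j \<in> {b,d}} = {b,d}"
    using assms by auto
  have "dim_row ?S = 2" "dim_col ?S = 2"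
    unfolding dim_submatrix rows cols using assms by simp_all
  then have S: "?S \<in> carrier_mat 2 2" by (rule carrier_matI)
  have "{x\<in>{a,c}. x < a} = {}" "{x\<in>{a,c}. x < c} = {a}"
    "{y\<in>{b,d}. y < b} = {}" "{y\<in>{b,d}. y < d} = {b}"
    using assms by auto
  then have pos: "card {x\<in>{a,c}. x < a} = 0" "card {x\<in>{a,c}. x < c} = 1"
    "card {y\<in>{b,d}. y < b} = 0" "card {y\<in>{b,d}. y < d} = 1"
    by simp_all
  have "?S $$ (0,0) = A $$ (a,b)" "?S $$ (0,1) = A $$ (a,d)"
    "?S $$ (1,0) = A $$ (c,b)" "?S $$ (1,1) = A $$ (c,d)"
    using submatrix_index_card[of a A b "{a,c}" "{b,d}"] submatrix_index_card[of a A d "{a,c}" "{b,d}"]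
      submatrix_index_card[of c A b "{a,c}" "{b,d}"] submatrix_index_card[of c A d "{a,c}" "{b,d}"]
    unfolding pos using assms by auto
  then show "det ?S = A $$ (a,b) * A $$ (c,d) - A $$ (a,d) * A $$ (c,b)"
    by (simp add: det_mat_2x2[OF S])
qed

lemma rank_ge_2_if_minor_nonzero:
  fixes A :: "'a::field mat"
  assumes A: "A \<in> carrier_mat n nc"
    and ac: "a < n" "c < n" "a \<noteq> c" and bd: "b < nc" "d < nc" "b \<noteq> d"
    and minor: "A $$ (a,b) * A $$ (c,d) \<noteq> A $$ (a,d) * A $$ (c,b)"
  shows "2 \<le> vec_space.rank n A"
proof -
  have ordered: "2 \<le> vec_space.rank n A"
    if "a < c" "c < n" "b < d" "d < nc" "A $$ (a,b) * A $$ (c,d) \<noteq> A $$ (a,d) * A $$ (c,b)"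
    for a b c d
  proof -
    have "det (submatrix A {a,c} {b,d}) \<noteq> 0"
      using det_submatrix_2x2[OF A that(1-4)] that(5) by simp
    from vec_space.rank_gt_minor[OF A this] have "card {j. j < nc \<and> j \<in> {b,d}} \<le> vec_space.rank n A" .
    moreover have "{j. j < nc \<and> j \<in> {b,d}} = {b,d}" using that by auto
    ultimately show ?thesis using that by simp
  qed
  show ?thesis
  proof (cases "a < c")
    case True
    then show ?thesis
      using bd minor ordered[of a c b d] ordered[of a c d b] ac
      by (cases "b < d") (auto simp: mult.commute)
  next
    case False
    then show ?thesis
      using bd minor ordered[of c a b d] ordered[of c a d b] ac
      by (cases "b < d") (auto simp: mult.commute)
  qed
qed

lemma minors_vanish_if_rank_le_1:
  fixes A :: "'a::field mat"
  assumes "A \<in> carrier_mat n nc" "vec_space.rank n A \<le> 1"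
    and "a < n" "c < n" "b < nc" "d < nc"
  shows "A $$ (a,b) * A $$ (c,d) = A $$ (a,d) * A $$ (c,b)"
proof (cases "a = c \<or> b = d")
  case True
  then show ?thesis by (auto simp: mult.commute)
next
  case False
  show ?thesis
  proof (rule ccontr)
    assume "\<not> ?thesis"
    with False have "2 \<le> vec_space.rank n A"
      using assms by (intro rank_ge_2_if_minor_nonzero) auto
    with assms(2) show False by simp
  qed
qed

lemma mult_mat_vec_index_sum:
  assumes "A \<in> carrier_mat n m" "v \<in> carrier_vec m" "j < n"
  shows "(A *\<^sub>v v) $ j = (\<Sum>k<m. A $$ (j,k) * v $ k)"
  using assms by (simp add: scalar_prod_def lessThan_atLeast0)

lemma vec_nonzero_index:
  assumes "v \<in> carrier_vec m" "v \<noteq> 0\<^sub>v m"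
  obtains j where "j < m" "v $ j \<noteq> 0"
proof (rule ccontr)
  assume "\<not> thesis"
  with that have "v = 0\<^sub>v m" using assms(1) by (intro eq_vecI) auto
  with assms(2) show False ..
qed

lemma symmetric_rank_le_1_mult_vec_eq_0:
  fixes A :: "'a::field mat"
  assumes A: "A \<in> carrier_mat m m" "transpose_mat A = A" "vec_space.rank m A \<le> 1"
    and pq: "p \<in> carrier_vec m" "q \<in> carrier_vec m" "p \<bullet> (A *\<^sub>v q) = 0"
  shows "A *\<^sub>v p = 0\<^sub>v m \<or> A *\<^sub>v q = 0\<^sub>v m"
proof -
  have sym: "A $$ (i,j) = A $$ (j,i)" if "i < m" "j < m" for i j
  proof -
    have "transpose_mat A $$ (i,j) = A $$ (j,i)" using A(1) that by simp
    then show ?thesis by (simp only: A(2))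
  qed
  have quadratic: "p \<bullet> (A *\<^sub>v q) = (\<Sum>k<m. p $ k * (\<Sum>l<m. A $$ (k,l) * q $ l))"
    using A(1) pq(1,2) by (auto simp: scalar_prod_def lessThan_atLeast0 mult_mat_vec_index_sum
        simp del: index_mult_mat_vec intro!: sum.cong)
  have product: "(A *\<^sub>v p) $ j * (A *\<^sub>v q) $ i = (p \<bullet> (A *\<^sub>v q)) * A $$ (j,i)"
    if "j < m" "i < m" for j i
  proof -
    have "(A *\<^sub>v p) $ j * (A *\<^sub>v q) $ i = (\<Sum>k<m. \<Sum>l<m. (A $$ (j,k) * A $$ (i,l)) * (p $ k * q $ l))"
      unfolding mult_mat_vec_index_sum[OF A(1) pq(1) that(1)] mult_mat_vec_index_sum[OF A(1) pq(2) that(2)]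
      by (simp add: sum_product algebra_simps)
    also have "\<dots> = (\<Sum>k<m. \<Sum>l<m. (A $$ (k,l) * A $$ (j,i)) * (p $ k * q $ l))"
    proof (intro sum.cong refl)
      fix k l assume "k \<in> {..<m}" "l \<in> {..<m}"
      then have "A $$ (j,k) * A $$ (i,l) = A $$ (k,j) * A $$ (i,l)" using sym[of j k] that by simp
      also have "\<dots> = A $$ (k,l) * A $$ (i,j)"
        using minors_vanish_if_rank_le_1[OF A(1) A(3)] \<open>k \<in> {..<m}\<close> \<open>l \<in> {..<m}\<close> that by simp
      also have "\<dots> = A $$ (k,l) * A $$ (j,i)" using sym[of i j] that by simp
      finally show "(A $$ (j,k) * A $$ (i,l)) * (p $ k * q $ l) = (A $$ (k,l) * A $$ (j,i)) * (p $ k * q $ l)"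
        by simp
    qed
    also have "\<dots> = (p \<bullet> (A *\<^sub>v q)) * A $$ (j,i)"
      unfolding quadratic by (simp add: sum_distrib_left sum_distrib_right algebra_simps)
    finally show ?thesis .
  qed
  show ?thesis
  proof (rule ccontr)
    assume "\<not> ?thesis"
    moreover have "A *\<^sub>v p \<in> carrier_vec m" "A *\<^sub>v q \<in> carrier_vec m"
      using A(1) pq by auto
    ultimately obtain j i where "j < m" "i < m" "(A *\<^sub>v p) $ j \<noteq> 0" "(A *\<^sub>v q) $ i \<noteq> 0"
      by (metis vec_nonzero_index)
    then show False
      using product[of j i] pq(3) by simp
  qed
qed

lemma minus_vec_eq_0_iff:
  fixes x y :: "'a::ab_group_add vec"
  assumes "x \<in> carrier_vec n" "y \<in> carrier_vec n"
  shows "x - y = 0\<^sub>v n \<longleftrightarrow> x = y"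
proof
  assume "x - y = 0\<^sub>v n"
  have "x $ i = y $ i" if "i < n" for i
  proof -
    have "(x - y) $ i = 0" using \<open>x - y = 0\<^sub>v n\<close> that by simp
    then show ?thesis using that carrier_vecD[OF assms(2)] by simp
  qed
  with assms show "x = y" by (intro eq_vecI) auto
qed (use assms in simp)

lemma mult_mat_vec_diff_eq_0_iff:
  fixes A B :: "'a::ring mat"
  assumes "A \<in> carrier_mat n m" "B \<in> carrier_mat n m" "v \<in> carrier_vec m"
  shows "(A - B) *\<^sub>v v = 0\<^sub>v n \<longleftrightarrow> A *\<^sub>v v = B *\<^sub>v v"
  unfolding minus_mult_distrib_mat_vec[OF assms]
  using assms by (intro minus_vec_eq_0_iff) auto

section \<open>Pullbacks of binary quadratic forms\<close>

(* Gram matrix of x \<mapsto> \<alpha> (u \<bullet> x)\<^sup>2 + 2 \<beta> (u \<bullet> x) (w \<bullet> x) + \<gamma> (w \<bullet> x)\<^sup>2 *)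
definition pullback_form :: "'a::comm_ring_1 \<Rightarrow> 'a \<Rightarrow> 'a \<Rightarrow> 'a vec \<Rightarrow> 'a vec \<Rightarrow> 'a mat" where
  "pullback_form \<alpha> \<beta> \<gamma> u w = mat (dim_vec u) (dim_vec u)
     (\<lambda>(i,j). \<alpha> * u$i * u$j + \<beta> * (u$i * w$j + w$i * u$j) + \<gamma> * w$i * w$j)"

lemma pullback_form_carrier [simp]:
  "pullback_form \<alpha> \<beta> \<gamma> u w \<in> carrier_mat (dim_vec u) (dim_vec u)"
  by (simp add: pullback_form_def)

lemma transpose_pullback_form [simp]:
  "transpose_mat (pullback_form \<alpha> \<beta> \<gamma> u w) = pullback_form \<alpha> \<beta> \<gamma> u w"
  by (rule eq_matI) (auto simp: pullback_form_def algebra_simps)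

lemma pullback_form_diff:
  "pullback_form \<alpha> \<beta> \<gamma> u w - pullback_form \<alpha>' \<beta>' \<gamma>' u w
     = pullback_form (\<alpha> - \<alpha>') (\<beta> - \<beta>') (\<gamma> - \<gamma>') u w"
  by (rule eq_matI) (auto simp: pullback_form_def algebra_simps)

lemma pullback_form_zero: "pullback_form 0 0 0 u w = 0\<^sub>m (dim_vec u) (dim_vec u)"
  by (rule eq_matI) (auto simp: pullback_form_def)

lemma pullback_form_mult_vec:
  assumes "dim_vec w = dim_vec u" "dim_vec x = dim_vec u"
  shows "pullback_form \<alpha> \<beta> \<gamma> u w *\<^sub>v x
    = (\<alpha> * (u \<bullet> x) + \<beta> * (w \<bullet> x)) \<cdot>\<^sub>v u + (\<beta> * (u \<bullet> x) + \<gamma> * (w \<bullet> x)) \<cdot>\<^sub>v w"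
  using assms
  by (intro eq_vecI) (auto simp: pullback_form_def scalar_prod_def sum_distrib_left
      sum_distrib_right sum.distrib algebra_simps)

lemma binary_form_nondegenerate:
  fixes \<alpha> \<beta> \<gamma> x y :: "'a::field"
  assumes "\<alpha> * \<gamma> \<noteq> \<beta> * \<beta>" "\<alpha> * x + \<beta> * y = 0" "\<beta> * x + \<gamma> * y = 0"
  shows "x = 0 \<and> y = 0"
proof -
  have "(\<alpha> * \<gamma> - \<beta> * \<beta>) * x = \<gamma> * (\<alpha> * x + \<beta> * y) - \<beta> * (\<beta> * x + \<gamma> * y)"
    "(\<alpha> * \<gamma> - \<beta> * \<beta>) * y = \<alpha> * (\<beta> * x + \<gamma> * y) - \<beta> * (\<alpha> * x + \<beta> * y)"
    by (simp_all add: algebra_simps)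
  then have "(\<alpha> * \<gamma> - \<beta> * \<beta>) * x = 0" "(\<alpha> * \<gamma> - \<beta> * \<beta>) * y = 0"
    using assms(2,3) by simp_all
  with assms(1) show ?thesis by simp
qed

context
  fixes u w :: "'a::field vec" and b d :: nat
  assumes dims: "dim_vec w = dim_vec u" "b < dim_vec u" "d < dim_vec u"
    and pivots: "u $ b = 1" "u $ d = 0" "w $ b = 0" "w $ d = 1"
begin

lemma rank_pullback_form_ge_2:
  assumes "\<alpha> * \<gamma> \<noteq> \<beta> * \<beta>"
  shows "2 \<le> vec_space.rank (dim_vec u) (pullback_form \<alpha> \<beta> \<gamma> u w)"
  using dims pivots assms
  by (intro rank_ge_2_if_minor_nonzero[of _ _ _ b d b d]) (auto simp: pullback_form_def)

lemma pullback_form_kernel: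
  assumes "\<alpha> * \<gamma> \<noteq> \<beta> * \<beta>" "dim_vec x = dim_vec u"
  shows "pullback_form \<alpha> \<beta> \<gamma> u w *\<^sub>v x = 0\<^sub>v (dim_vec u) \<longleftrightarrow> u \<bullet> x = 0 \<and> w \<bullet> x = 0"
proof
  assume "pullback_form \<alpha> \<beta> \<gamma> u w *\<^sub>v x = 0\<^sub>v (dim_vec u)"
  then have "(pullback_form \<alpha> \<beta> \<gamma> u w *\<^sub>v x) $ b = 0" "(pullback_form \<alpha> \<beta> \<gamma> u w *\<^sub>v x) $ d = 0"
    using dims by simp_all
  then have "\<alpha> * (u \<bullet> x) + \<beta> * (w \<bullet> x) = 0" "\<beta> * (u \<bullet> x) + \<gamma> * (w \<bullet> x) = 0"
    using dims pivots assms(2) by (simp_all add: pullback_form_mult_vec del: index_mult_mat_vec)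
  then show "u \<bullet> x = 0 \<and> w \<bullet> x = 0"
    using binary_form_nondegenerate assms(1) by blast
next
  assume "u \<bullet> x = 0 \<and> w \<bullet> x = 0"
  then show "pullback_form \<alpha> \<beta> \<gamma> u w *\<^sub>v x = 0\<^sub>v (dim_vec u)"
    using dims assms(2) by (intro eq_vecI) (simp_all add: pullback_form_mult_vec del: index_mult_mat_vec)
qed

end

section \<open>Points of the projective plane\<close>

(* Keep vec_of_list [a, b, c] intact, so that entries and scalar products evaluate through nth. *)
declare vec_of_list_Cons [simp del] vec_of_list_index [simp]

lemma scalar_prod_vec_of_list_3:
  "vec_of_list [a, b, c] \<bullet> vec_of_list [x, y, z] = a * x + b * y + (c * z :: 'a::comm_ring_1)"
  by (simp add: scalar_prod_def eval_nat_numeral)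

lemma vec_of_list_3_eq_iff:
  "vec_of_list [a, b, c] = vec_of_list [x, y, z] \<longleftrightarrow> a = x \<and> b = y \<and> c = z"
  by (metis list.inject list_vec)

(* The points of the projective plane, each represented with first nonzero coordinate 1. *)
definition proj_points :: "'a::field vec set" where
  "proj_points = (\<lambda>(y, z). vec_of_list [1, y, z]) ` UNIV \<union> (\<lambda>z. vec_of_list [0, 1, z]) ` UNIV
     \<union> {vec_of_list [0, 0, 1]}"

definition annihilator_basis :: "'a::field vec \<Rightarrow> 'a vec \<times> 'a vec" where
  "annihilator_basis p =
     (if p $ 0 \<noteq> 0 then (vec_of_list [- p $ 1, 1, 0], vec_of_list [- p $ 2, 0, 1])
      else if p $ 1 \<noteq> 0 then (vec_of_list [1, 0, 0], vec_of_list [0, - p $ 2, 1])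
      else (vec_of_list [1, 0, 0], vec_of_list [0, 1, 0]))"

lemma proj_point_carrier: "p \<in> proj_points \<Longrightarrow> p \<in> carrier_vec 3"
  unfolding proj_points_def carrier_vec_def by auto

lemma proj_point_nonzero:
  assumes "p \<in> proj_points"
  shows "p \<noteq> 0\<^sub>v 3"
proof
  assume "p = 0\<^sub>v 3"
  then have "p $ 0 = 0" "p $ 1 = 0" "p $ 2 = 0" by simp_all
  with assms show False unfolding proj_points_def by auto
qed

lemma dim_annihilator_basis [simp]:
  "dim_vec (fst (annihilator_basis p)) = 3" "dim_vec (snd (annihilator_basis p)) = 3"
  by (simp_all add: annihilator_basis_def)

lemma annihilator_basis_annihilates:
  assumes "p \<in> proj_points" "annihilator_basis p = (u, w)"
  shows "u \<bullet> p = 0" "w \<bullet> p = 0"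
  using assms unfolding proj_points_def
  by (auto simp: annihilator_basis_def scalar_prod_vec_of_list_3)

lemma annihilator_basis_pivots:
  assumes "p \<in> proj_points" "annihilator_basis p = (u, w)"
  obtains b d where "b < 3" "d < 3" "u $ b = 1" "u $ d = 0" "w $ b = 0" "w $ d = 1"
proof -
  consider (first) y z where "p = vec_of_list [1, y, z]" | (second) z where "p = vec_of_list [0, 1, z]"
    | (third) "p = vec_of_list [0, 0, 1]"
    using assms(1) unfolding proj_points_def by auto
  then show ?thesis
  proof cases
    case first
    then show ?thesis using that[of 1 2] assms(2) by (auto simp: annihilator_basis_def)
  next
    case second
    then show ?thesis using that[of 0 2] assms(2) by (auto simp: annihilator_basis_def)
  next
    case third
    then show ?thesis using that[of 0 1] assms(2) by (auto simp: annihilator_basis_def)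
  qed
qed

lemma annihilator_basis_separates:
  assumes "p \<in> proj_points" "q \<in> proj_points" "annihilator_basis p = (u, w)"
    and "u \<bullet> q = 0" "w \<bullet> q = 0"
  shows "q = p"
  using assms unfolding proj_points_def
  by (auto simp: annihilator_basis_def scalar_prod_vec_of_list_3 vec_of_list_3_eq_iff)

lemma card_proj_points:
  assumes "card (UNIV :: 'a::{field,finite} set) = q"
  shows "card (proj_points :: 'a vec set) = q^2 + q + 1"
proof -
  let ?A = "(\<lambda>(y, z). vec_of_list [1, y, z]) ` (UNIV :: ('a \<times> 'a) set)"
  let ?B = "(\<lambda>z. vec_of_list [0, 1, z]) ` (UNIV :: 'a set)"
  have "card (UNIV :: ('a \<times> 'a) set) = q^2"
    using assms card_cartesian_product[of "UNIV :: 'a set" "UNIV :: 'a set"] by (simp add: power2_eq_square)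
  then have "card ?A = q^2"
    by (subst card_image) (auto simp: inj_on_def vec_of_list_3_eq_iff)
  moreover have "card ?B = q"
    using assms by (subst card_image) (auto simp: inj_on_def vec_of_list_3_eq_iff)
  moreover have "?A \<inter> ?B = {}" "vec_of_list [0, 0, 1] \<notin> ?A \<union> ?B"
    by (auto simp: vec_of_list_3_eq_iff)
  ultimately show ?thesis
    unfolding proj_points_def by (simp add: card_Un_disjoint)
qed

lemma ex_not_square_plus_self: "\<exists>n::'a::{field,finite}. \<forall>x. x * x + x \<noteq> n"
proof -
  let ?f = "\<lambda>x::'a. x * x + x"
  have "?f 0 = ?f (- 1)" "(0::'a) \<noteq> - 1" by simp_all
  then have "\<not> inj ?f" unfolding inj_def by blast
  then have "\<not> surj ?f" using finite_UNIV_surj_inj[of ?f] by auto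
  then show ?thesis unfolding surj_def by metis
qed

lemma not_square_plus_self_nondegenerate:
  fixes n s t :: "'a::field"
  assumes "\<forall>x. x * x + x \<noteq> n" "(s, t) \<noteq> (0, 0)"
  shows "s * (n * s - t) \<noteq> t * t"
proof
  assume det: "s * (n * s - t) = t * t"
  show False
  proof (cases "s = 0")
    case True
    then show False using det assms(2) by simp
  next
    case False
    then have "(t / s) * (t / s) + t / s = n" using det by (simp add: field_simps algebra_simps)
    then show False using assms(1) by blast
  qed
qed

definition codeword :: "'a::field \<Rightarrow> 'a vec \<Rightarrow> 'a \<Rightarrow> 'a \<Rightarrow> 'a mat" where
  "codeword n p s t = pullback_form s t (n * s - t) (fst (annihilator_basis p)) (snd (annihilator_basis p))"

lemma codeword_carrier [simp]: "codeword n p s t \<in> carrier_mat 3 3"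
  unfolding codeword_def by (metis pullback_form_carrier dim_annihilator_basis(1))

lemma transpose_codeword [simp]: "transpose_mat (codeword n p s t) = codeword n p s t"
  by (simp add: codeword_def)

lemma codeword_in_sym_mats3: "codeword n p s t \<in> sym_mats3"
  by (simp add: sym_mats3_def)

lemma codeword_diff: "codeword n p s t - codeword n p s' t' = codeword n p (s - s') (t - t')"
  by (simp add: codeword_def pullback_form_diff algebra_simps)

lemma codeword_zero: "codeword n p 0 0 = 0\<^sub>m 3 3"
  by (simp add: codeword_def pullback_form_zero)

lemma codeword_annihilates_point:
  assumes "p \<in> proj_points"
  shows "codeword n p s t *\<^sub>v p = 0\<^sub>v 3"
proof -
  obtain u w where uw: "annihilator_basis p = (u, w)" by fastforce
  then have "u \<bullet> p = 0" "w \<bullet> p = 0" "dim_vec u = 3" "dim_vec w = 3"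
    using annihilator_basis_annihilates[OF assms] dim_annihilator_basis[of p] by auto
  with assms show ?thesis
    unfolding codeword_def uw
    by (intro eq_vecI) (simp_all add: pullback_form_mult_vec proj_point_carrier[THEN carrier_vecD]
        del: index_mult_mat_vec)
qed

lemma rank_codeword_le_2:
  assumes "p \<in> proj_points"
  shows "vec_space.rank 3 (codeword n p s t) \<le> 2"
proof -
  have "det (codeword n p s t) = 0"
    using det_0_iff_vec_prod_zero_field[OF codeword_carrier] assms
      proj_point_carrier proj_point_nonzero codeword_annihilates_point by blast
  then show ?thesis
    using vec_space.det_zero_low_rank[OF codeword_carrier] by fastforce
qed

context
  fixes n :: "'a::field"
  assumes n: "\<forall>x. x * x + x \<noteq> n"
begin

lemma rank_codeword_ge_2:
  assumes "p \<in> proj_points" "(s, t) \<noteq> (0, 0)"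
  shows "2 \<le> vec_space.rank 3 (codeword n p s t)"
proof -
  obtain u w where uw: "annihilator_basis p = (u, w)" by fastforce
  obtain b d where "b < 3" "d < 3" "u $ b = 1" "u $ d = 0" "w $ b = 0" "w $ d = 1"
    using annihilator_basis_pivots[OF assms(1) uw] .
  moreover have "dim_vec u = 3" "dim_vec w = 3" using dim_annihilator_basis[of p] uw by auto
  ultimately have "2 \<le> vec_space.rank (dim_vec u) (pullback_form s t (n * s - t) u w)"
    using not_square_plus_self_nondegenerate[OF n assms(2)]
    by (intro rank_pullback_form_ge_2[where b = b and d = d]) auto
  then show ?thesis
    using \<open>dim_vec u = 3\<close> uw by (simp add: codeword_def)
qed

lemma codeword_kernel:
  assumes "p \<in> proj_points" "q \<in> proj_points" "(s, t) \<noteq> (0, 0)"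
  shows "codeword n p s t *\<^sub>v q = 0\<^sub>v 3 \<longleftrightarrow> q = p"
proof
  assume kernel: "codeword n p s t *\<^sub>v q = 0\<^sub>v 3"
  obtain u w where uw: "annihilator_basis p = (u, w)" by fastforce
  obtain b d where "b < 3" "d < 3" "u $ b = 1" "u $ d = 0" "w $ b = 0" "w $ d = 1"
    using annihilator_basis_pivots[OF assms(1) uw] .
  moreover have "dim_vec u = 3" "dim_vec w = 3" "dim_vec q = 3"
    using dim_annihilator_basis[of p] uw proj_point_carrier[OF assms(2)] by auto
  moreover have "pullback_form s t (n * s - t) u w *\<^sub>v q = 0\<^sub>v (dim_vec u)"
    using kernel uw \<open>dim_vec u = 3\<close> by (simp add: codeword_def)
  ultimately have "u \<bullet> q = 0 \<and> w \<bullet> q = 0"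
    using not_square_plus_self_nondegenerate[OF n assms(3)]
    by (subst (asm) pullback_form_kernel[where b = b and d = d]) auto
  then show "q = p"
    using annihilator_basis_separates[OF assms(1,2) uw] by blast
next
  assume "q = p"
  then show "codeword n p s t *\<^sub>v q = 0\<^sub>v 3"
    using codeword_annihilates_point[OF assms(1)] by simp
qed

lemma codeword_eq_zero_iff:
  assumes "p \<in> proj_points"
  shows "codeword n p s t = 0\<^sub>m 3 3 \<longleftrightarrow> (s, t) = (0, 0)"
proof
  assume "codeword n p s t = 0\<^sub>m 3 3"
  show "(s, t) = (0, 0)"
  proof (rule ccontr)
    assume "(s, t) \<noteq> (0, 0)"
    then have "2 \<le> vec_space.rank 3 (codeword n p s t)" by (rule rank_codeword_ge_2[OF assms])
    with \<open>codeword n p s t = 0\<^sub>m 3 3\<close> show False by (simp add: vec_space.rank_0I)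
  qed
qed (simp add: codeword_zero)

lemma codeword_kills_other_point:
  assumes "p \<in> proj_points" "q \<in> proj_points" "q \<noteq> p" "codeword n p s t *\<^sub>v q = 0\<^sub>v 3"
  shows "codeword n p s t = 0\<^sub>m 3 3"
proof (rule ccontr)
  assume "codeword n p s t \<noteq> 0\<^sub>m 3 3"
  then have "(s, t) \<noteq> (0, 0)" using codeword_eq_zero_iff[OF assms(1)] by simp
  then have "q = p" using codeword_kernel[OF assms(1,2)] assms(4) by simp
  with assms(3) show False ..
qed

lemma rank_codeword_minus_zero_ge_2:
  assumes "p \<in> proj_points" "codeword n p s t \<noteq> 0\<^sub>m 3 3"
  shows "2 \<le> vec_space.rank 3 (codeword n p s t - 0\<^sub>m 3 3)"
    and "2 \<le> vec_space.rank 3 (0\<^sub>m 3 3 - codeword n p s t)"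
proof -
  have "(s, t) \<noteq> (0, 0)" "(- s, - t) \<noteq> (0, 0)"
    using codeword_eq_zero_iff[OF assms(1)] assms(2) by auto
  then show "2 \<le> vec_space.rank 3 (codeword n p s t - 0\<^sub>m 3 3)"
    and "2 \<le> vec_space.rank 3 (0\<^sub>m 3 3 - codeword n p s t)"
    using rank_codeword_ge_2[OF assms(1)] codeword_diff[of n p s t 0 0] codeword_diff[of n p 0 0 s t]
    by (simp_all add: codeword_zero)
qed

lemma codeword_diff_rank_le_1:
  assumes p: "p \<in> proj_points" "p' \<in> proj_points" "p \<noteq> p'"
    and rank: "vec_space.rank 3 (codeword n p s t - codeword n p' s' t') \<le> 1"
  shows "codeword n p s t = 0\<^sub>m 3 3 \<or> codeword n p' s' t' = 0\<^sub>m 3 3"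
proof -
  let ?X = "codeword n p s t" and ?Y = "codeword n p' s' t'"
  have carrier: "p \<in> carrier_vec 3" "p' \<in> carrier_vec 3"
    using p proj_point_carrier by auto
  have Xp: "?X *\<^sub>v p = 0\<^sub>v 3" and Yp': "?Y *\<^sub>v p' = 0\<^sub>v 3"
    using codeword_annihilates_point p by auto
  \<comment> \<open>X kills p, Y kills p', and both are symmetric.\<close>
  have "p \<bullet> (?X *\<^sub>v p') = (?X *\<^sub>v p) \<bullet> p'"
    using transpose_vec_mult_scalar[OF codeword_carrier carrier(2,1)] by simp
  then have "p \<bullet> ((?X - ?Y) *\<^sub>v p') = 0"
    unfolding minus_mult_distrib_mat_vec[OF codeword_carrier codeword_carrier carrier(2)] Yp'
      minus_zero_vec[OF mult_mat_vec_carrier[OF codeword_carrier carrier(2)]] Xp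
    using carrier(2) by simp
  then have "(?X - ?Y) *\<^sub>v p = 0\<^sub>v 3 \<or> (?X - ?Y) *\<^sub>v p' = 0\<^sub>v 3"
    using symmetric_rank_le_1_mult_vec_eq_0[OF minus_carrier_mat[OF codeword_carrier] _ rank carrier]
    by (simp add: transpose_minus[OF codeword_carrier codeword_carrier])
  then have "?Y *\<^sub>v p = 0\<^sub>v 3 \<or> ?X *\<^sub>v p' = 0\<^sub>v 3"
    unfolding mult_mat_vec_diff_eq_0_iff[OF codeword_carrier codeword_carrier carrier(1)]
      mult_mat_vec_diff_eq_0_iff[OF codeword_carrier codeword_carrier carrier(2)] Xp Yp'
    by auto
  then show ?thesis
    using codeword_kills_other_point[OF p(2,1)] codeword_kills_other_point[OF p(1,2)] p(3) by blast
qed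

lemma rank_codeword_diff_ge_2:
  assumes p: "p \<in> proj_points" "p' \<in> proj_points"
    and ne: "codeword n p s t \<noteq> codeword n p' s' t'"
  shows "2 \<le> vec_space.rank 3 (codeword n p s t - codeword n p' s' t')"
proof (cases "p = p'")
  case True
  with ne have "(s - s', t - t') \<noteq> (0, 0)" by auto
  with True show ?thesis
    using rank_codeword_ge_2[OF p(1)] by (simp add: codeword_diff)
next
  case False
  show ?thesis
  proof (rule ccontr)
    assume "\<not> ?thesis"
    then have rank: "vec_space.rank 3 (codeword n p s t - codeword n p' s' t') \<le> 1" by simp
    from codeword_diff_rank_le_1[OF p False this] show False
    proof
      assume "codeword n p s t = 0\<^sub>m 3 3"
      with ne rank show False using rank_codeword_minus_zero_ge_2(2)[OF p(2), of s' t'] by simp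
    next
      assume "codeword n p' s' t' = 0\<^sub>m 3 3"
      with ne rank show False using rank_codeword_minus_zero_ge_2(1)[OF p(1), of s t] by simp
    qed
  qed
qed

lemma codeword_inj:
  assumes p: "p \<in> proj_points" "p' \<in> proj_points" and st: "(s, t) \<noteq> (0, 0)"
    and eq: "codeword n p s t = codeword n p' s' t'"
  shows "p = p' \<and> s = s' \<and> t = t'"
proof -
  have "codeword n p s t *\<^sub>v p' = 0\<^sub>v 3"
    unfolding eq using codeword_annihilates_point[OF p(2)] .
  then have "p' = p" using codeword_kernel[OF p st] by blast
  moreover from this have "codeword n p (s - s') (t - t') = 0\<^sub>m 3 3"
    using eq by (simp flip: codeword_diff)
  then have "s = s' \<and> t = t'" using codeword_eq_zero_iff[OF p(1)] by simp
  ultimately show ?thesis by simp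
qed

lemma inj_on_codeword:
  "inj_on (\<lambda>(p, s, t). codeword n p s t) (proj_points \<times> (UNIV - {(0, 0)}))"
proof (rule inj_onI)
  fix x y
  assume "x \<in> proj_points \<times> (UNIV - {(0, 0)})" "y \<in> proj_points \<times> (UNIV - {(0, 0)})"
    and "(\<lambda>(p, s, t). codeword n p s t) x = (\<lambda>(p, s, t). codeword n p s t) y"
  moreover obtain p s t p' s' t' where "x = (p, s, t)" "y = (p', s', t')"
    by (metis prod_cases3)
  ultimately show "x = y"
    using codeword_inj[of p p' s t s' t'] by auto
qed

end

lemma is_codeI:
  assumes "finite C" "C \<subseteq> sym_mats3"
    and "\<And>c1 c2. c1 \<in> C \<Longrightarrow> c2 \<in> C \<Longrightarrow> c1 \<noteq> c2 \<Longrightarrow> d \<le> rank_dist c1 c2"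
    and "x \<in> C" "y \<in> C" "x \<noteq> y" "rank_dist x y = d"
  shows "is_code d C"
proof -
  let ?R = "{rank_dist c1 c2 | c1 c2. c1 \<in> C \<and> c2 \<in> C \<and> c1 \<noteq> c2}"
  have "?R \<subseteq> (\<lambda>(c1, c2). rank_dist c1 c2) ` (C \<times> C)" by auto
  then have "finite ?R" using assms(1) finite_subset by blast
  moreover have "d \<in> ?R" using assms(4-7) by blast
  ultimately have "Min ?R = d" using assms(3) by (intro Min_eqI) auto
  with assms(2,4) show ?thesis unfolding is_code_def by blast
qed

definition pencil_code :: "'a::field \<Rightarrow> 'a mat set" where
  "pencil_code n = (\<lambda>(p, s, t). codeword n p s t) ` (proj_points \<times> UNIV)"

lemma codeword_in_pencil_code: "p \<in> proj_points \<Longrightarrow> codeword n p s t \<in> pencil_code n"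
  unfolding pencil_code_def by (rule rev_image_eqI[of "(p, s, t)"]) simp_all

lemma finite_pencil_code: "finite (pencil_code (n :: 'a::{field,finite}))"
  by (simp add: pencil_code_def proj_points_def)

lemma pencil_code_eq_insert_zero:
  "pencil_code n = insert (0\<^sub>m 3 3) ((\<lambda>(p, s, t). codeword n p s t) ` (proj_points \<times> (UNIV - {(0, 0)})))"
  (is "_ = insert _ (?f ` ?S)")
proof
  show "pencil_code n \<subseteq> insert (0\<^sub>m 3 3) (?f ` ?S)"
  proof
    fix X assume "X \<in> pencil_code n"
    then obtain p s t where p: "p \<in> proj_points" and X: "X = codeword n p s t"
      unfolding pencil_code_def by auto
    show "X \<in> insert (0\<^sub>m 3 3) (?f ` ?S)"
    proof (cases "(s, t) = (0, 0)")
      case True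
      then show ?thesis using X by (simp add: codeword_zero)
    next
      case False
      then have "X \<in> ?f ` ?S" using p X by (intro rev_image_eqI[of "(p, s, t)"]) simp_all
      then show ?thesis by blast
    qed
  qed
  have "vec_of_list [0, 0, 1] \<in> proj_points" by (simp add: proj_points_def)
  then have "0\<^sub>m 3 3 \<in> pencil_code n"
    using codeword_in_pencil_code[of _ n 0 0] by (simp add: codeword_zero)
  moreover have "?f ` ?S \<subseteq> pencil_code n"
    unfolding pencil_code_def by (rule image_mono) blast
  ultimately show "insert (0\<^sub>m 3 3) (?f ` ?S) \<subseteq> pencil_code n" by blast
qed

lemma card_pencil_code:
  fixes n :: "'a::{field,finite}"
  assumes n: "\<forall>x. x * x + x \<noteq> n" and q: "card (UNIV :: 'a set) = q"
  shows "card (pencil_code n) = (q^2 - 1) * (q^2 + q + 1) + 1"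
proof -
  let ?f = "\<lambda>(p, s, t). codeword n p s t"
    and ?S = "(proj_points :: 'a vec set) \<times> (UNIV - {(0 :: 'a, 0 :: 'a)})"
  have "0\<^sub>m 3 3 \<notin> ?f ` ?S"
  proof
    assume "0\<^sub>m 3 3 \<in> ?f ` ?S"
    then obtain p s t where "p \<in> proj_points" "(s, t) \<noteq> (0, 0)" "codeword n p s t = 0\<^sub>m 3 3"
      by fastforce
    then show False using codeword_eq_zero_iff[OF n] by blast
  qed
  then have "card (pencil_code n) = card (?f ` ?S) + 1"
    unfolding pencil_code_eq_insert_zero by (simp add: proj_points_def)
  also have "\<dots> = card ?S + 1"
    by (simp only: card_image[OF inj_on_codeword[OF n]])
  also have "\<dots> = (q^2 - 1) * (q^2 + q + 1) + 1"
  proof -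
    have "card (UNIV :: ('a \<times> 'a) set) = q^2"
      using q card_cartesian_product[of "UNIV :: 'a set" "UNIV :: 'a set"] by (simp add: power2_eq_square)
    then have "card (UNIV - {(0 :: 'a, 0 :: 'a)}) = q^2 - 1"
      using card_Diff_singleton[of "(0 :: 'a, 0 :: 'a)" UNIV] by simp
    then show ?thesis
      unfolding card_cartesian_product card_proj_points[OF q] by simp
  qed
  finally show ?thesis .
qed

lemma is_code_pencil_code:
  fixes n :: "'a::{field,finite}"
  assumes n: "\<forall>x. x * x + x \<noteq> n"
  shows "is_code 2 (pencil_code n)"
proof -
  let ?p = "vec_of_list [0, 0, 1] :: 'a vec"
  have p: "?p \<in> proj_points" by (simp add: proj_points_def)
  show ?thesis
  proof (rule is_codeI[where x = "codeword n ?p 1 0" and y = "codeword n ?p 0 0"])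
    show "finite (pencil_code n)" by (rule finite_pencil_code)
    show "pencil_code n \<subseteq> sym_mats3"
      unfolding pencil_code_def using codeword_in_sym_mats3 by auto
    show "2 \<le> rank_dist X Y" if "X \<in> pencil_code n" "Y \<in> pencil_code n" "X \<noteq> Y" for X Y
      using that rank_codeword_diff_ge_2[OF n] unfolding pencil_code_def rank_dist_def by auto
    show "codeword n ?p 1 0 \<in> pencil_code n" "codeword n ?p 0 0 \<in> pencil_code n"
      using codeword_in_pencil_code[OF p] by blast+
    show "codeword n ?p 1 0 \<noteq> codeword n ?p 0 0"
      using codeword_eq_zero_iff[OF n p] by (simp add: codeword_zero)
    show "rank_dist (codeword n ?p 1 0) (codeword n ?p 0 0) = 2"
      using rank_codeword_ge_2[OF n p, of 1 0] rank_codeword_le_2[OF p, of n 1 0]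
      by (simp add: rank_dist_def codeword_diff)
  qed
qed

theorem mainTheorem8:
  fixes q :: nat
  assumes "card (UNIV :: ('a::{field,finite}) set) = q"
  shows "\<exists>C :: 'a mat set. is_code 2 C \<and> card C = (q^2 - 1) * (q^2 + q + 1) + 1"
proof -
  obtain n :: 'a where n: "\<forall>x. x * x + x \<noteq> n"
    using ex_not_square_plus_self by blast
  show ?thesis
    using is_code_pencil_code[OF n] card_pencil_code[OF n assms] by blast
qed

end
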